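(* Let $n,m$ be integers with $0<m<n$. Let $f_n\in\mathcal{V}_n^m$, $g_n\in\mathcal{W}_n^m$, and $f_{3n}=f_n+g_n\in\mathcal{V}_{3n}^m$, with expansions $f_n=\sum_{k=1}^na_{n,k}\tilde\varphi_{n,k}^m$, $g_n=\sum_{h=1}^{2n}b_{n,h}\tilde\psi_{n,h}^m$, $f_{3n}=\sum_{j=1}^{3n}a_{3n,j}\tilde\varphi_{3n,j}^m$, and set $\vec a_n=(a_{n,k})_{k=1}^n$, $\vec b_n=(b_{n,h})_{h=1}^{2n}$, $\vec a_{3n}=(a_{3n,j})_{j=1}^{3n}$. Define $A\in\mathbb{R}^{n\times3n}$ and $B\in\mathbb{R}^{2n\times3n}$ by $$A_{k,j}=\sum_{s=0}^{n-m}\tau_{s,k}^n\tau_{s,j}^{3n}+\sum_{s=n-m+1}^{n-1}\tau_{s,k}^n\big[\mu_{n,s}^m\tau_{s,j}^{3n}-\mu_{n,2n-s}^m\tau_{2n-s,j}^{3n}\big],$$ $$B_{h,j}=\sum_{r=n}^{n+m-1}\frac{\sigma_{r,h}^n}{\sqrt{v_{n,r}^m}}\big[\mu_{n,r}^m\tau_{2n-r,j}^{3n}+\mu_{n,2n-r}^m\tau_{r,j}^{3n}\big]+\sum_{r=n+m}^{3n-m}\frac{\sigma_{r,h}^n}{\sqrt{v_{n,r}^m}}\tau_{r,j}^{3n}+\sum_{r=3n-m+1}^{3n-1}\sigma_{r,h}^n\sqrt{v_{n,r}^m}\,\tau_{r,j}^{3n}.$$ Then $\vec a_n=A\vec a_{3n}$,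 $\vec b_n=B\vec a_{3n}$, and $\vec a_{3n}=A^T\vec a_n+B^T\vec b_n$.
   Context: Let $w(x)=(1-x^2)^{-1/2}$ on $[-1,1]$, $\langle f,g\rangle_{L^2_w}=\int_{-1}^1fgw\,dx$. Orthonormal Chebyshev polynomials: $p_0=\sqrt{1/\pi}$, $p_r(x)=\sqrt{2/\pi}\cos(r\arccos x)$, $r\ge1$. Chebyshev nodes $x_k^N=\cos\frac{(2k-1)\pi}{2N}$, $k=1,\ldots,N$; $Y_n=\{x_k^{3n}\}_{k=1}^{3n}\setminus\{x_k^n\}_{k=1}^n=\{y_k^n:k=1,\ldots,2n\}$. For $0<m<N$: $\mu_{N,r}^m=1$ if $0\le r\le N-m$, $\frac{m+N-r}{2m}$ if $N-m<r<N+m$, $0$ otherwise; for $r=0,\ldots,N-1$: $q_{N,r}^m=p_r$ if $r\le N-m$, $q_{N,r}^m=\mu_{N,r}^mp_r-\mu_{N,2N-r}^mp_{2N-r}$ if $N-m<r<N$; $\nu_{N,r}^m=1$ if $r\le N-m$, $\frac{m^2+(N-r)^2}{2m^2}$ if $N-m<r<N$; $\tau_{r,k}^N=\sqrt{\frac{\pi}{N\nu_{N,r}^m}}p_r(x_k^N)$; $\tilde\varphi_{N,k}^m=\sum_{r=0}^{N-1}\tau_{r,k}^Nq_{N,r}^m$ ($k=1,\ldots,N$), an orthonormal basis of $\mathcal{V}_N^m=\mathrm{span}\{q_{N,r}^m\}_{r=0}^{N-1}$. $\mathcal{W}_n^m$ is the orthogonal complement of $\mathcal{V}_n^m$ in $\mathcal{V}_{3n}^m$.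 For $r=n,\ldots,3n-1$: $\tilde q_{n,r}^m=\mu_{n,r}^mp_{2n-r}+\mu_{n,2n-r}^mp_r$ if $n\le r<n+m$, $p_r$ if $n+m\le r\le3n-m$, $q_{3n,r}^m$ if $3n-m<r<3n$; $v_{n,r}^m=\frac{m^2+(n-r)^2}{2m^2}$ if $n<r<n+m$, $1$ if $r=n$ or $n+m\le r\le3n-m$, $\frac{m^2+(3n-r)^2}{2m^2}$ if $3n-m<r<3n$. For $k=1,\ldots,2n$: $\sigma_{r,k}^n=\sqrt{\frac{\pi}{3n}}\,c_{r,k}$ with $c_{r,k}=p_n(y_k^n)$ if $r=n$, $\frac{p_r(y_k^n)+p_{2n-r}(y_k^n)}{\sqrt2}$ if $n<r<2n$, $\frac{p_{2n}(y_k^n)+\sqrt2p_0(y_k^n)}{\sqrt3}$ if $r=2n$, $\sqrt{3/2}\,p_r(y_k^n)$ if $2n<r<3n$. Orthonormal VP wavelets: $\tilde\psi_{n,k}^m=\sum_{r=n}^{3n-1}\sigma_{r,k}^n\tilde q_{n,r}^m/\sqrt{v_{n,r}^m}$, $k=1,\ldots,2n$, an orthonormal basis of $\mathcal{W}_n^m$. *)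

theory Defs
  imports Complex_Main
begin

text \<open>Orthonormal Chebyshev polynomials w.r.t. w(x) = (1-x^2)^(-1/2) on [-1,1].\<close>
definition cheb_p :: "nat \<Rightarrow> real \<Rightarrow> real" where
  "cheb_p r x = (if r = 0 then sqrt (1 / pi) else sqrt (2 / pi) * cos (real r * arccos x))"

definition cheb_node :: "nat \<Rightarrow> nat \<Rightarrow> real" where
  "cheb_node N k = cos ((2 * real k - 1) * pi / (2 * real N))"

text \<open>Y_n = {x_k^{3n}} minus {x_k^n}, enumerated increasingly as y_1^n, ..., y_{2n}^n.\<close>
definition Yset :: "nat \<Rightarrow> real set" where
  "Yset n = (cheb_node (3 * n) ` {1..3 * n}) - (cheb_node n ` {1..n})"

definition ynode :: "nat \<Rightarrow> nat \<Rightarrow> real" where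
  "ynode n k = sorted_list_of_set (Yset n) ! (k - 1)"

definition mu :: "nat \<Rightarrow> nat \<Rightarrow> nat \<Rightarrow> real" where
  "mu N m r = (if r \<le> N - m then 1
     else if r < N + m then (real m + real N - real r) / (2 * real m) else 0)"

definition qV :: "nat \<Rightarrow> nat \<Rightarrow> nat \<Rightarrow> real \<Rightarrow> real" where
  "qV N m r x = (if r \<le> N - m then cheb_p r x
     else mu N m r * cheb_p r x - mu N m (2 * N - r) * cheb_p (2 * N - r) x)"

definition nu :: "nat \<Rightarrow> nat \<Rightarrow> nat \<Rightarrow> real" where
  "nu N m r = (if r \<le> N - m then 1
     else (real m ^ 2 + (real N - real r) ^ 2) / (2 * real m ^ 2))"

definition tau :: "nat \<Rightarrow> nat \<Rightarrow> nat \<Rightarrow> nat \<Rightarrow> real" where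
  "tau N m r k = sqrt (pi / (real N * nu N m r)) * cheb_p r (cheb_node N k)"

definition phiV :: "nat \<Rightarrow> nat \<Rightarrow> nat \<Rightarrow> real \<Rightarrow> real" where
  "phiV N m k x = (\<Sum>r<N. tau N m r k * qV N m r x)"

definition qW :: "nat \<Rightarrow> nat \<Rightarrow> nat \<Rightarrow> real \<Rightarrow> real" where
  "qW n m r x = (if n \<le> r \<and> r < n + m then mu n m r * cheb_p (2 * n - r) x + mu n m (2 * n - r) * cheb_p r x
     else if n + m \<le> r \<and> r \<le> 3 * n - m then cheb_p r x
     else qV (3 * n) m r x)"

definition vW :: "nat \<Rightarrow> nat \<Rightarrow> nat \<Rightarrow> real" where
  "vW n m r = (if n < r \<and> r < n + m then (real m ^ 2 + (real n - real r) ^ 2) / (2 * real m ^ 2)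
     else if r = n \<or> (n + m \<le> r \<and> r \<le> 3 * n - m) then 1
     else (real m ^ 2 + (3 * real n - real r) ^ 2) / (2 * real m ^ 2))"

definition cW :: "nat \<Rightarrow> nat \<Rightarrow> nat \<Rightarrow> real" where
  "cW n r k = (let y = ynode n k in
     if r = n then cheb_p n y
     else if n < r \<and> r < 2 * n then (cheb_p r y + cheb_p (2 * n - r) y) / sqrt 2
     else if r = 2 * n then (cheb_p (2 * n) y + sqrt 2 * cheb_p 0 y) / sqrt 3
     else sqrt (3 / 2) * cheb_p r y)"

definition sigma :: "nat \<Rightarrow> nat \<Rightarrow> nat \<Rightarrow> real" where
  "sigma n r k = sqrt (pi / (3 * real n)) * cW n r k"

definition psiW :: "nat \<Rightarrow> nat \<Rightarrow> nat \<Rightarrow> real \<Rightarrow> real" where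
  "psiW n m k x = (\<Sum>r = n..<3 * n. sigma n r k * qW n m r x / sqrt (vW n m r))"

text \<open>Decomposition matrices A (n x 3n) and B (2n x 3n), indices starting at 1.\<close>
definition matA :: "nat \<Rightarrow> nat \<Rightarrow> nat \<Rightarrow> nat \<Rightarrow> real" where
  "matA n m k j =
     (\<Sum>s = 0..n - m. tau n m s k * tau (3 * n) m s j)
   + (\<Sum>s = n - m + 1..n - 1. tau n m s k *
        (mu n m s * tau (3 * n) m s j - mu n m (2 * n - s) * tau (3 * n) m (2 * n - s) j))"

definition matB :: "nat \<Rightarrow> nat \<Rightarrow> nat \<Rightarrow> nat \<Rightarrow> real" where
  "matB n m h j =
     (\<Sum>r = n..n + m - 1. sigma n r h / sqrt (vW n m r) *
        (mu n m r * tau (3 * n) m (2 * n - r) j + mu n m (2 * n - r) * tau (3 * n) m r j))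
   + (\<Sum>r = n + m..3 * n - m. sigma n r h / sqrt (vW n m r) * tau (3 * n) m r j)
   + (\<Sum>r = 3 * n - m + 1..3 * n - 1. sigma n r h * sqrt (vW n m r) * tau (3 * n) m r j)"

end

(*
  Every function in the statement is a combination of the Chebyshev polynomials p_r with
  r < 3n + m <= 4n, and the 4n-point Gauss-Chebyshev rule makes p_0, ..., p_(4n-1)
  orthonormal.  So all inner products can be computed with this discrete inner product instead
  of the integral, and f_3n = f_n + g_n is only needed at the quadrature nodes.  Discrete
  orthogonality of the cosines, both in the frequency and in the node index, makes the
  phi_(N,k) orthonormal.  At every node y of Y_n one has T_2n(y) = 1/2, which folds the
  frequencies above 2n back onto those below and makes the psi_(n,h) orthonormal; the q-tilde
  are orthogonal to V_n by construction.  The Gram entries <phi_(n,k), phi_(3n,j)> and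
  <psi_(n,h), phi_(3n,j)> are A_kj and B_hj, so pairing f_3n = f_n + g_n with phi_(n,k),
  psi_(n,h) and phi_(3n,j) gives the three identities.
*)

theory Submission
  imports Defs
begin

section \<open>Discrete orthogonality of the Chebyshev cosines\<close>

definition cheb_angle :: "nat \<Rightarrow> nat \<Rightarrow> real" where
  "cheb_angle N k = (2 * real k - 1) * pi / (2 * real N)"

definition cheb_scale :: "nat \<Rightarrow> real" where
  "cheb_scale r = (if r = 0 then sqrt (1 / pi) else sqrt (2 / pi))"

lemma cheb_node_eq_cos: "cheb_node N k = cos (cheb_angle N k)"
  unfolding cheb_node_def cheb_angle_def by simp

lemma cheb_angle_bounds:
  assumes "1 \<le> k" "k \<le> N"
  shows "0 \<le> cheb_angle N k" "cheb_angle N k \<le> pi"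
proof -
  have "(2 * real k - 1) * pi \<le> (2 * real N) * pi" using assms by (intro mult_right_mono) auto
  then show "cheb_angle N k \<le> pi" using assms by (simp add: cheb_angle_def field_simps)
  show "0 \<le> cheb_angle N k" using assms by (simp add: cheb_angle_def)
qed

lemma cheb_p_cos:
  assumes "0 \<le> \<theta>" "\<theta> \<le> pi"
  shows "cheb_p r (cos \<theta>) = cheb_scale r * cos (real r * \<theta>)"
  using assms by (simp add: cheb_p_def cheb_scale_def arccos_cos)

lemma cheb_p_cheb_node:
  assumes "1 \<le> k" "k \<le> N"
  shows "cheb_p r (cheb_node N k) = cheb_scale r * cos (real r * cheb_angle N k)"
  unfolding cheb_node_eq_cos using cheb_p_cos cheb_angle_bounds[OF assms] by blast

lemma cheb_angle_inj: "inj_on (cheb_angle N) {1..N}"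
  by (rule inj_onI) (auto simp: cheb_angle_def field_simps)

lemma cheb_node_inj: "inj_on (cheb_node N) {1..N}"
proof (rule inj_onI)
  fix k l assume kl: "k \<in> {1..N}" "l \<in> {1..N}" and "cheb_node N k = cheb_node N l"
  then have "cheb_angle N k = cheb_angle N l"
    using cos_inj_pi cheb_angle_bounds unfolding cheb_node_eq_cos by auto
  then show "k = l" using kl by (auto intro: inj_onD[OF cheb_angle_inj])
qed

lemma cos_diff_of_nat: "cos ((real a - real b) * x) = cos (real (if b \<le> a then a - b else b - a) * x)"
proof (cases "b \<le> a")
  case False
  then have "(real a - real b) * x = - (real (b - a) * x)" by (simp add: of_nat_diff algebra_simps)
  with False show ?thesis by simp
qed (simp add: of_nat_diff)

lemma dirichlet_kernel:
  "sin (x / 2) * (1 + 2 * (\<Sum>r=1..M. cos (real r * x))) = sin ((real M + 1 / 2) * x)"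
proof (induction M)
  case (Suc M)
  have "x / 2 + real (Suc M) * x = (real M + 3 / 2) * x"
    and "x / 2 - real (Suc M) * x = - ((real M + 1 / 2) * x)" by (simp_all add: algebra_simps)
  then have "2 * sin (x / 2) * cos (real (Suc M) * x)
      = sin ((real M + 3 / 2) * x) - sin ((real M + 1 / 2) * x)"
    using sin_times_cos[of "x / 2" "real (Suc M) * x"] by simp
  with Suc show ?case by (simp add: algebra_simps)
qed simp

lemma sin_mult_sum_cos_odd:
  "2 * sin x * (\<Sum>k=1..K. cos ((2 * real k - 1) * x)) = sin (2 * real K * x)"
proof (induction K)
  case (Suc K)
  have "x + (2 * real (Suc K) - 1) * x = 2 * real (Suc K) * x"
    and "x - (2 * real (Suc K) - 1) * x = - (2 * real K * x)" by (simp_all add: algebra_simps)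
  then have "2 * sin x * cos ((2 * real (Suc K) - 1) * x)
      = sin (2 * real (Suc K) * x) - sin (2 * real K * x)"
    using sin_times_cos[of x "(2 * real (Suc K) - 1) * x"] by simp
  with Suc show ?case by (simp add: algebra_simps)
qed simp

lemma sum_cos_multiples:
  assumes "j < 2 * N"
  shows "(\<Sum>r\<in>{1..<N}. cos (real r * (real j * pi / real N)))
    = (if j = 0 then real N - 1 else if even j then -1 else 0)"
proof (cases "j = 0")
  case False
  define x where "x = real j * pi / real N"
  obtain M where N: "N = Suc M" using assms by (cases N) auto
  have "real j * pi < (2 * real N) * pi"
    using assms by (intro mult_strict_right_mono) auto
  then have "0 < x / 2" "x / 2 < pi"
    using False by (auto simp: x_def N field_simps)
  then have sin_pos: "0 < sin (x / 2)" by (rule sin_gt_zero)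
  have "(real M + 1 / 2) * x = real j * pi - x / 2"
    by (simp add: x_def N field_simps)
  then have "sin (x / 2) * (1 + 2 * (\<Sum>r=1..M. cos (real r * x))) = sin (real j * pi - x / 2)"
    by (simp only: dirichlet_kernel)
  also have "\<dots> = sin (x / 2) * (- ((-1) ^ j))"
    by (simp add: sin_diff)
  finally have "sin (x / 2) * (1 + 2 * (\<Sum>r=1..M. cos (real r * x))) = sin (x / 2) * (- ((-1) ^ j))" .
  then have "1 + 2 * (\<Sum>r=1..M. cos (real r * x)) = - ((-1) ^ j)"
    using sin_pos by (metis less_irrefl mult_left_cancel)
  then show ?thesis
    using False by (auto simp: x_def N atLeastLessThanSuc_atLeastAtMost)
qed (use assms in \<open>simp add: of_nat_diff\<close>)

lemma sum_cos_cheb_angles: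
  assumes "j < 2 * K"
  shows "(\<Sum>k=1..K. cos (real j * cheb_angle K k)) = (if j = 0 then real K else 0)"
proof (cases "j = 0")
  case False
  define x where "x = real j * pi / (2 * real K)"
  have "0 < x" "x < pi" using assms False by (auto simp: x_def field_simps)
  then have "0 < sin x" by (rule sin_gt_zero)
  moreover have "real j * cheb_angle K k = (2 * real k - 1) * x" for k
    by (simp add: x_def cheb_angle_def)
  moreover have "sin (2 * real K * x) = 0"
    using assms by (simp add: x_def)
  ultimately show ?thesis
    using False sin_mult_sum_cos_odd[of x K] by simp
qed simp

lemma sum_cos_mult_cos_cheb_angles:
  assumes "a < K" "b < K"
  shows "(\<Sum>k=1..K. cos (real a * cheb_angle K k) * cos (real b * cheb_angle K k))
    = (if a = b then if a = 0 then real K else real K / 2 else 0)"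
proof -
  define d where "d = (if b \<le> a then a - b else b - a)"
  have prod: "cos (real a * \<theta>) * cos (real b * \<theta>)
      = (cos (real d * \<theta>) + cos (real (a + b) * \<theta>)) / 2" for \<theta>
    using cos_diff_of_nat[of a b \<theta>] by (simp add: cos_times_cos d_def algebra_simps)
  have "d < 2 * K" "a + b < 2 * K" "d = 0 \<longleftrightarrow> a = b"
    using assms by (auto simp: d_def)
  then have sum_d: "(\<Sum>k=1..K. cos (real d * cheb_angle K k)) = (if a = b then real K else 0)"
    and sum_ab: "(\<Sum>k=1..K. cos (real (a + b) * cheb_angle K k))
      = (if a = 0 \<and> b = 0 then real K else 0)"
    using sum_cos_cheb_angles[of d K] sum_cos_cheb_angles[of "a + b" K] by auto
  have "(\<Sum>k=1..K. cos (real a * cheb_angle K k) * cos (real b * cheb_angle K k))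
      = ((\<Sum>k=1..K. cos (real d * cheb_angle K k))
          + (\<Sum>k=1..K. cos (real (a + b) * cheb_angle K k))) / 2"
    unfolding prod by (simp only: sum.distrib flip: sum_divide_distrib)
  also have "\<dots> = (if a = b then if a = 0 then real K else real K / 2 else 0)"
    unfolding sum_d sum_ab by auto
  finally show ?thesis .
qed

lemma cheb_angles_dual_orthogonal:
  assumes "k \<in> {1..N}" "l \<in> {1..N}"
  shows "1 / 2 + (\<Sum>s\<in>{1..<N}. cos (real s * cheb_angle N k) * cos (real s * cheb_angle N l))
    = (if k = l then real N / 2 else 0)"
proof -
  define d where "d = (if l \<le> k then k - l else l - k)"
  define e where "e = k + l - 1"
  have prod: "cos (real s * cheb_angle N k) * cos (real s * cheb_angle N l)
      = (cos (real s * (real d * pi / real N)) + cos (real s * (real e * pi / real N))) / 2" for s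
  proof -
    have diff: "real s * cheb_angle N k - real s * cheb_angle N l
        = (real k - real l) * (real s * pi / real N)"
      using assms by (auto simp: cheb_angle_def field_simps)
    have "cos (real s * cheb_angle N k - real s * cheb_angle N l)
        = cos (real d * (real s * pi / real N))"
      unfolding diff cos_diff_of_nat d_def ..
    then have "cos (real s * cheb_angle N k - real s * cheb_angle N l)
        = cos (real s * (real d * pi / real N))"
      by (simp add: ac_simps)
    moreover have "real s * cheb_angle N k + real s * cheb_angle N l = real s * (real e * pi / real N)"
      using assms by (auto simp: cheb_angle_def e_def of_nat_diff field_simps)
    ultimately show ?thesis
      by (simp add: cos_times_cos)
  qed
  have "d < 2 * N" "e < 2 * N" "d = 0 \<longleftrightarrow> k = l" "e \<noteq> 0" "odd (d + e)"
    using assms by (auto simp: d_def e_def)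
  then have "(\<Sum>s\<in>{1..<N}. cos (real s * (real d * pi / real N)))
      + (\<Sum>s\<in>{1..<N}. cos (real s * (real e * pi / real N))) = (if k = l then real N - 1 else -1)"
    using sum_cos_multiples[of d N] sum_cos_multiples[of e N] by auto
  moreover have "1 / 2 + (\<Sum>s\<in>{1..<N}. cos (real s * cheb_angle N k) * cos (real s * cheb_angle N l))
      = (1 + (\<Sum>s\<in>{1..<N}. cos (real s * (real d * pi / real N)))
           + (\<Sum>s\<in>{1..<N}. cos (real s * (real e * pi / real N)))) / 2"
    unfolding prod by (simp only: sum.distrib add_divide_distrib flip: sum_divide_distrib)
  ultimately show ?thesis
    by auto
qed

section \<open>The nodes of Y_n\<close>

definition cW_angle :: "nat \<Rightarrow> nat \<Rightarrow> real \<Rightarrow> real" where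
  "cW_angle n r \<theta> = (if r = n then cos (real n * \<theta>)
     else if n < r \<and> r < 2 * n then (cos (real r * \<theta>) + cos (real (2 * n - r) * \<theta>)) / sqrt 2
     else if r = 2 * n then (cos (real (2 * n) * \<theta>) + 1) / sqrt 3
     else sqrt (3 / 2) * cos (real r * \<theta>))"

lemma sum_atLeastLessThan_reflect: "(\<Sum>t\<in>{1..<n}. f (n - t)) = (\<Sum>t\<in>{1..<n::nat}. f t)"
  by (rule sum.reindex_bij_witness[where i="\<lambda>t. n - t" and j="\<lambda>t. n - t"]) auto

lemma sum_atLeastLessThan_three_blocks:
  fixes n :: nat
  assumes "0 < n"
  shows "(\<Sum>r\<in>{n..<3 * n}. f r) = f n + f (2 * n) + (\<Sum>t\<in>{1..<n}. f (n + t) + f (3 * n - t))"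
proof -
  have "(\<Sum>r\<in>{n..<3 * n}. f r)
      = f n + (\<Sum>r\<in>{n + 1..<2 * n}. f r) + f (2 * n) + (\<Sum>r\<in>{2 * n + 1..<3 * n}. f r)"
    using assms sum.atLeastLessThan_concat[of n "2 * n" "3 * n" f]
      sum.atLeast_Suc_lessThan[of n "2 * n" f] sum.atLeast_Suc_lessThan[of "2 * n" "3 * n" f]
    by (simp add: add.assoc)
  moreover have "(\<Sum>r\<in>{n + 1..<2 * n}. f r) = (\<Sum>t\<in>{1..<n}. f (n + t))"
    using sum.shift_bounds_nat_ivl[of f 1 n n] by (simp add: add.commute mult_2)
  moreover have "(\<Sum>r\<in>{2 * n + 1..<3 * n}. f r) = (\<Sum>t\<in>{1..<n}. f (3 * n - t))"
    using sum.shift_bounds_nat_ivl[of f 1 "2 * n" n] sum_atLeastLessThan_reflect[of "\<lambda>t. f (2 * n + t)" n]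
    by (simp add: add.commute)
  ultimately show ?thesis
    by (simp add: sum.distrib ac_simps)
qed

lemma cos_reflect_at_third:
  assumes "cos (real (2 * n) * z) = 1 / 2" "t \<le> n"
  shows "cos (real (3 * n - t) * z) = cos (real (n - t) * z) - cos (real (n + t) * z)"
proof -
  have "cos (real (2 * n) * z + real (n - t) * z) + cos (real (2 * n) * z - real (n - t) * z)
      = cos (real (n - t) * z)"
    using assms(1) by (simp add: cos_add cos_diff)
  moreover have "real (2 * n) * z + real (n - t) * z = real (3 * n - t) * z"
    and "real (2 * n) * z - real (n - t) * z = real (n + t) * z"
    using assms(2) by (simp_all add: of_nat_diff algebra_simps)
  ultimately show ?thesis by simp
qed

text \<open>With cos (2n x) = 1/2 the frequency 3n - t folds onto n - t and n + t, and then both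
  sides are the same quadratic form in the cosines of the frequencies n +- t.\<close>

lemma sum_cW_angle_products:
  assumes "0 < n" "cos (real (2 * n) * x) = 1 / 2" "cos (real (2 * n) * y) = 1 / 2"
  shows "(\<Sum>r\<in>{n..<3 * n}. cW_angle n r x * cW_angle n r y)
    = 1 / 2 + (\<Sum>s\<in>{1..<3 * n}. cos (real s * x) * cos (real s * y))"
proof -
  define C D where "C s = cos (real s * x)" and "D s = cos (real s * y)" for s
  have block: "cW_angle n (n + t) x * cW_angle n (n + t) y
        + cW_angle n (3 * n - t) x * cW_angle n (3 * n - t) y
      = C (n - t) * D (n - t) + (C (n + t) * D (n + t) + C (3 * n - t) * D (3 * n - t))"
    if "t \<in> {1..<n}" for t
  proof -
    have low: "cW_angle n (n + t) x * cW_angle n (n + t) y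
        = (C (n + t) + C (n - t)) * (D (n + t) + D (n - t)) / 2"
      and high: "cW_angle n (3 * n - t) x * cW_angle n (3 * n - t) y
        = 3 / 2 * (C (3 * n - t) * D (3 * n - t))"
      using that by (auto simp: cW_angle_def C_def D_def algebra_simps real_sqrt_mult[symmetric])
    have third: "C (3 * n - t) = C (n - t) - C (n + t)" "D (3 * n - t) = D (n - t) - D (n + t)"
      using that assms cos_reflect_at_third unfolding C_def D_def by auto
    show ?thesis
      unfolding low high third by (simp add: field_simps)
  qed
  have "cW_angle n (2 * n) z = 3 / (2 * sqrt 3)" if "cos (real (2 * n) * z) = 1 / 2" for z
    using assms unfolding cW_angle_def that by simp
  then have ends: "cW_angle n n x * cW_angle n n y = C n * D n"
    "cW_angle n (2 * n) x * cW_angle n (2 * n) y = 3 / 4"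
    using assms by (simp_all add: cW_angle_def C_def D_def)
  have "(\<Sum>r\<in>{n..<3 * n}. cW_angle n r x * cW_angle n r y)
      = C n * D n + 3 / 4 + (\<Sum>t\<in>{1..<n}.
          C (n - t) * D (n - t) + (C (n + t) * D (n + t) + C (3 * n - t) * D (3 * n - t)))"
    unfolding sum_atLeastLessThan_three_blocks[OF assms(1)] ends
    by (rule arg_cong[where f = "\<lambda>s. C n * D n + 3 / 4 + s"], rule sum.cong[OF refl], rule block)
  also have "\<dots> = 1 / 2 + (\<Sum>s\<in>{1..<n}. C s * D s) + (\<Sum>s\<in>{n..<3 * n}. C s * D s)"
  proof -
    have "C (2 * n) * D (2 * n) = 1 / 4"
      unfolding C_def D_def assms(2,3) by simp
    then show ?thesis
      unfolding sum_atLeastLessThan_three_blocks[OF assms(1)]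
        sum_atLeastLessThan_reflect[of "\<lambda>s. C s * D s", symmetric]
      by (simp add: sum.distrib)
  qed
  also have "\<dots> = 1 / 2 + (\<Sum>s\<in>{1..<3 * n}. C s * D s)"
    using assms by (simp add: sum.atLeastLessThan_concat)
  finally show ?thesis
    unfolding C_def D_def .
qed

lemma cheb_node_refine:
  assumes "1 \<le> l"
  shows "cheb_node n l = cheb_node (3 * n) (3 * l - 1)"
proof (cases "n = 0")
  case False
  have "real (3 * l - 1) = 3 * real l - 1" using assms by (simp add: of_nat_diff)
  then have "(2 * real l - 1) * pi / (2 * real n) = (2 * real (3 * l - 1) - 1) * pi / (2 * real (3 * n))"
    using False by (simp add: field_simps)
  then show ?thesis unfolding cheb_node_def by simp
qed (simp add: cheb_node_def)

lemma card_Yset: "card (Yset n) = 2 * n"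
proof -
  have "cheb_node n ` {1..n} \<subseteq> cheb_node (3 * n) ` {1..3 * n}"
  proof
    fix y assume "y \<in> cheb_node n ` {1..n}"
    then obtain l where "l \<in> {1..n}" "y = cheb_node (3 * n) (3 * l - 1)"
      using cheb_node_refine by auto
    then show "y \<in> cheb_node (3 * n) ` {1..3 * n}" by force
  qed
  moreover have "card (cheb_node (3 * n) ` {1..3 * n}) = 3 * n" "card (cheb_node n ` {1..n}) = n"
    using card_image[OF cheb_node_inj] by simp_all
  ultimately show ?thesis
    unfolding Yset_def by (simp add: card_Diff_subset)
qed

lemma length_sorted_Yset: "length (sorted_list_of_set (Yset n)) = 2 * n"
  by (simp add: card_Yset)

lemma ynode_in_Yset:
  assumes "h \<in> {1..2 * n}"
  shows "ynode n h \<in> Yset n"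
proof -
  have "h - 1 < length (sorted_list_of_set (Yset n))"
    using assms length_sorted_Yset by auto
  then have "sorted_list_of_set (Yset n) ! (h - 1) \<in> set (sorted_list_of_set (Yset n))"
    by (rule nth_mem)
  then show ?thesis
    unfolding ynode_def by (simp add: Yset_def)
qed

lemma inj_on_ynode: "inj_on (ynode n) {1..2 * n}"
proof (rule inj_onI)
  fix h h' assume h: "h \<in> {1..2 * n}" "h' \<in> {1..2 * n}" and "ynode n h = ynode n h'"
  then have "h - 1 = h' - 1"
    unfolding ynode_def
    using nth_eq_iff_index_eq[OF distinct_sorted_list_of_set, of "h - 1" "Yset n" "h' - 1"] length_sorted_Yset
    by auto
  with h show "h = h'" by auto
qed

lemma cos_add_nat_mult_2pi: "cos (x + real q * (2 * pi)) = cos x"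
proof (induction q)
  case (Suc q)
  have "x + real (Suc q) * (2 * pi) = (x + real q * (2 * pi)) + 2 * pi"
    by (simp add: algebra_simps)
  then show ?case
    by (simp only: cos_periodic Suc.IH)
qed simp

text \<open>The coarse node x_l^n is the fine node x_(3l-1)^(3n); for every other fine node x_k^(3n)
  the angle 2n theta_k = (2k - 1) pi / 3 is congruent to +-pi/3 modulo 2 pi.\<close>

lemma Yset_cheb_angle:
  assumes "y \<in> Yset n"
  obtains k where "k \<in> {1..3 * n}" "y = cheb_node (3 * n) k"
    "cos (real (2 * n) * cheb_angle (3 * n) k) = 1 / 2"
proof -
  obtain k where k: "k \<in> {1..3 * n}" "y = cheb_node (3 * n) k" and coarse: "y \<notin> cheb_node n ` {1..n}"
    using assms unfolding Yset_def by auto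
  have angle: "real (2 * n) * cheb_angle (3 * n) k = (2 * real k - 1) * pi / 3"
    using k by (simp add: cheb_angle_def field_simps)
  define q where "q = k div 3"
  have k_eq: "k = 3 * q + k mod 3"
    unfolding q_def by simp
  then have real_k: "real k = 3 * real q + real (k mod 3)"
    by (metis of_nat_add of_nat_mult of_nat_numeral)
  consider "k mod 3 = 0" | "k mod 3 = 1" | "k mod 3 = 2" by linarith
  then have "cos (real (2 * n) * cheb_angle (3 * n) k) = 1 / 2"
  proof cases
    case 1
    then have "(2 * real k - 1) * pi / 3 = - (pi / 3) + real q * (2 * pi)"
      using real_k by (simp add: field_simps)
    then show ?thesis
      unfolding angle by (simp only: cos_add_nat_mult_2pi cos_minus cos_60)
  next
    case 2
    then have "(2 * real k - 1) * pi / 3 = pi / 3 + real q * (2 * pi)"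
      using real_k by (simp add: field_simps)
    then show ?thesis
      unfolding angle by (simp only: cos_add_nat_mult_2pi cos_60)
  next
    case 3
    then have "q + 1 \<in> {1..n}" "3 * (q + 1) - 1 = k"
      using k k_eq by auto
    moreover have "y = cheb_node n (q + 1)"
      using k calculation(2) cheb_node_refine[of "q + 1" n] by simp
    ultimately have "y \<in> cheb_node n ` {1..n}"
      by blast
    with coarse show ?thesis ..
  qed
  with k that show ?thesis by blast
qed

lemma cW_eq_cW_angle:
  assumes "0 < n" "n \<le> r" "ynode n h = cos \<theta>" "0 \<le> \<theta>" "\<theta> \<le> pi"
  shows "cW n r h = sqrt (2 / pi) * cW_angle n r \<theta>"
  using assms
  by (auto simp: cW_def cW_angle_def cheb_p_cos cheb_scale_def Let_def field_simps real_sqrt_mult[symmetric])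

lemma sigma_orthonormal:
  assumes "0 < n" "h \<in> {1..2 * n}" "h' \<in> {1..2 * n}"
  shows "(\<Sum>r\<in>{n..<3 * n}. sigma n r h * sigma n r h') = (if h = h' then 1 else 0)"
proof -
  obtain k where k: "k \<in> {1..3 * n}" "ynode n h = cheb_node (3 * n) k"
    "cos (real (2 * n) * cheb_angle (3 * n) k) = 1 / 2"
    using Yset_cheb_angle[OF ynode_in_Yset[OF assms(2)]] by metis
  obtain k' where k': "k' \<in> {1..3 * n}" "ynode n h' = cheb_node (3 * n) k'"
    "cos (real (2 * n) * cheb_angle (3 * n) k') = 1 / 2"
    using Yset_cheb_angle[OF ynode_in_Yset[OF assms(3)]] by metis
  have same: "h = h' \<longleftrightarrow> k = k'"
    using k k' assms inj_on_ynode[of n] cheb_node_inj[of "3 * n"] by (metis inj_on_contraD)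
  have "sigma n r h * sigma n r h'
      = 2 / (3 * real n) * (cW_angle n r (cheb_angle (3 * n) k) * cW_angle n r (cheb_angle (3 * n) k'))"
    if "r \<in> {n..<3 * n}" for r
  proof -
    have "cW n r h = sqrt (2 / pi) * cW_angle n r (cheb_angle (3 * n) k)"
      and "cW n r h' = sqrt (2 / pi) * cW_angle n r (cheb_angle (3 * n) k')"
      using that assms k k' cheb_angle_bounds
      by (auto intro!: cW_eq_cW_angle simp: cheb_node_eq_cos)
    then show ?thesis
      using assms by (simp add: sigma_def field_simps real_sqrt_mult[symmetric])
  qed
  then have "(\<Sum>r\<in>{n..<3 * n}. sigma n r h * sigma n r h')
      = 2 / (3 * real n) * (\<Sum>r\<in>{n..<3 * n}.
          cW_angle n r (cheb_angle (3 * n) k) * cW_angle n r (cheb_angle (3 * n) k'))"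
    by (simp add: sum_distrib_left)
  also have "\<dots> = 2 / (3 * real n) * (if k = k' then real (3 * n) / 2 else 0)"
    unfolding sum_cW_angle_products[OF assms(1) k(3) k'(3)] cheb_angles_dual_orthogonal[OF k(1) k'(1)] ..
  also have "\<dots> = (if h = h' then 1 else 0)"
    using assms same by simp
  finally show ?thesis .
qed

section \<open>The Gauss-Chebyshev inner product\<close>

text \<open>The K-point Gauss-Chebyshev rule is exact for polynomials of degree below 2K, so on
  polynomials of degree below K this is the inner product of L^2_w.\<close>

definition node_inner :: "nat \<Rightarrow> (real \<Rightarrow> real) \<Rightarrow> (real \<Rightarrow> real) \<Rightarrow> real" where
  "node_inner K F G = pi / real K * (\<Sum>k=1..K. F (cheb_node K k) * G (cheb_node K k))"

lemma node_inner_commute: "node_inner K F G = node_inner K G F"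
  unfolding node_inner_def by (simp add: mult.commute)

lemma node_inner_add_left: "node_inner K (\<lambda>x. F x + G x) H = node_inner K F H + node_inner K G H"
  unfolding node_inner_def by (simp add: algebra_simps sum.distrib)

lemma node_inner_sum_left:
  "node_inner K (\<lambda>x. \<Sum>i\<in>I. c i * F i x) G = (\<Sum>i\<in>I. c i * node_inner K (F i) G)"
  unfolding node_inner_def sum_distrib_left sum_distrib_right
  by (subst sum.swap) (simp add: ac_simps)

lemma node_inner_sum_right:
  "node_inner K F (\<lambda>x. \<Sum>i\<in>I. c i * G i x) = (\<Sum>i\<in>I. c i * node_inner K F (G i))"
  by (simp add: node_inner_commute[of K F] node_inner_sum_left)

lemma node_inner_cong_left:
  assumes "\<And>x. x \<in> {-1..1} \<Longrightarrow> F x = G x"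
  shows "node_inner K F H = node_inner K G H"
proof -
  have "cheb_node K k \<in> {-1..1}" for k
    by (simp add: cheb_node_def)
  then show ?thesis
    unfolding node_inner_def using assms by simp
qed

lemma cheb_scale_mult_self: "cheb_scale r * cheb_scale r = (if r = 0 then 1 / pi else 2 / pi)"
  by (simp add: cheb_scale_def)

lemma node_inner_cheb_p:
  assumes "a < K" "b < K"
  shows "node_inner K (cheb_p a) (cheb_p b) = (if a = b then 1 else 0)"
proof -
  have "node_inner K (cheb_p a) (cheb_p b) = pi / real K * (cheb_scale a * cheb_scale b)
      * (\<Sum>k=1..K. cos (real a * cheb_angle K k) * cos (real b * cheb_angle K k))"
    unfolding node_inner_def sum_distrib_left
    by (intro sum.cong) (auto simp: cheb_p_cheb_node)
  also have "\<dots> = pi / real K * (cheb_scale a * cheb_scale b)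
      * (if a = b then if a = 0 then real K else real K / 2 else 0)"
    by (simp only: sum_cos_mult_cos_cheb_angles[OF assms])
  also have "\<dots> = (if a = b then 1 else 0)"
    using assms by (auto simp: cheb_scale_mult_self)
  finally show ?thesis .
qed

section \<open>Gram matrices of the generating functions\<close>

definition cheb_binom :: "real \<Rightarrow> nat \<Rightarrow> real \<Rightarrow> nat \<Rightarrow> real \<Rightarrow> real" where
  "cheb_binom a i b j x = a * cheb_p i x + b * cheb_p j x"

lemma node_inner_cheb_binom:
  assumes "i < K" "j < K" "i' < K" "j' < K"
  shows "node_inner K (cheb_binom a i b j) (cheb_binom a' i' b' j') =
    (if i = i' then a * a' else 0) + (if i = j' then a * b' else 0)
    + (if j = i' then b * a' else 0) + (if j = j' then b * b' else 0)"
proof -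
  have "node_inner K (cheb_binom a i b j) (cheb_binom a' i' b' j') =
     a * a' * node_inner K (cheb_p i) (cheb_p i') + a * b' * node_inner K (cheb_p i) (cheb_p j')
    + b * a' * node_inner K (cheb_p j) (cheb_p i') + b * b' * node_inner K (cheb_p j) (cheb_p j')"
    unfolding node_inner_def cheb_binom_def by (simp add: algebra_simps sum.distrib sum_distrib_left)
  then show ?thesis
    using assms by (simp add: node_inner_cheb_p)
qed

lemma node_inner_cheb_binom_disjoint:
  assumes "i < K" "j < K" "i' < K" "j' < K" "i \<noteq> i'" "i \<noteq> j'" "j \<noteq> i'" "j \<noteq> j'"
  shows "node_inner K (cheb_binom a i b j) (cheb_binom a' i' b' j') = 0"
  using assms by (simp add: node_inner_cheb_binom)

lemma node_inner_cheb_binom_same: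
  assumes "i < K" "j < K" "i \<noteq> j"
  shows "node_inner K (cheb_binom a i b j) (cheb_binom a' i b' j) = a * a' + b * b'"
  using assms by (simp add: node_inner_cheb_binom)

lemma node_inner_cheb_binom_left:
  "node_inner K (cheb_binom a i b j) F = a * node_inner K (cheb_p i) F + b * node_inner K (cheb_p j) F"
  unfolding node_inner_def cheb_binom_def by (simp add: algebra_simps sum.distrib sum_distrib_left)

lemma qW_low:
  "n \<le> r \<Longrightarrow> r < n + m \<Longrightarrow>
    qW n m r = cheb_binom (mu n m r) (2 * n - r) (mu n m (2 * n - r)) r"
  by (auto simp: fun_eq_iff qW_def cheb_binom_def)

lemma qW_middle: "n + m \<le> r \<Longrightarrow> r \<le> 3 * n - m \<Longrightarrow> qW n m r = cheb_binom 1 r 0 r"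
  by (auto simp: fun_eq_iff qW_def cheb_binom_def)

lemma qV_low: "r \<le> N - m \<Longrightarrow> qV N m r = cheb_binom 1 r 0 r"
  by (auto simp: fun_eq_iff qV_def cheb_binom_def)

lemma qV_high:
  "N - m < r \<Longrightarrow> qV N m r = cheb_binom (mu N m r) r (- mu N m (2 * N - r)) (2 * N - r)"
  by (auto simp: fun_eq_iff qV_def cheb_binom_def)

lemma qW_high_eq_qV: "3 * n - m < r \<Longrightarrow> m < n \<Longrightarrow> qW n m r = qV (3 * n) m r"
  by (auto simp: fun_eq_iff qW_def)

lemma qW_high:
  "3 * n - m < r \<Longrightarrow> m < n \<Longrightarrow>
    qW n m r = cheb_binom (mu (3 * n) m r) r (- mu (3 * n) m (6 * n - r)) (6 * n - r)"
  by (simp add: qW_high_eq_qV qV_high)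

lemma wavelet_index_cases:
  fixes r n m :: nat
  obtains (low) "r < n + m" | (middle) "n + m \<le> r" "r \<le> 3 * n - m" | (high) "3 * n - m < r"
  using that by linarith

lemma scaling_index_cases:
  fixes r N m :: nat
  obtains (low) "r \<le> N - m" | (high) "N - m < r"
  using that by linarith

lemma mu_sq_add_mu_reflect_sq:
  assumes "0 < m" "N - m < r" "r < N"
  shows "mu N m r ^ 2 + mu N m (2 * N - r) ^ 2 = nu N m r"
proof -
  have "mu N m r = (real m + real N - real r) / (2 * real m)"
    and "mu N m (2 * N - r) = (real m - real N + real r) / (2 * real m)"
    and "nu N m r = (real m ^ 2 + (real N - real r) ^ 2) / (2 * real m ^ 2)"
    using assms by (auto simp: mu_def nu_def of_nat_diff)
  with assms show ?thesis
    by (simp only:) (simp add: field_simps power2_eq_square)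
qed

lemma vW_high_eq_nu: "3 * n - m < r \<Longrightarrow> m < n \<Longrightarrow> vW n m r = nu (3 * n) m r"
  by (auto simp: nu_def vW_def)

lemma node_inner_qV:
  assumes "0 < m" "N + m \<le> K" "r < N" "r' < N"
  shows "node_inner K (qV N m r) (qV N m r') = (if r = r' then nu N m r else 0)"
proof (cases "r = r'")
  case True
  show ?thesis
  proof (cases r N m rule: scaling_index_cases)
    case high
    with assms True show ?thesis
      by (simp add: qV_high node_inner_cheb_binom_same mu_sq_add_mu_reflect_sq flip: power2_eq_square)
  qed (use assms True in \<open>simp add: qV_low node_inner_cheb_binom nu_def\<close>)
next
  case False
  have "node_inner K (qV N m r) (qV N m r') = 0"
    using assms False
    by (cases r N m rule: scaling_index_cases; cases r' N m rule: scaling_index_cases)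
      (simp_all only: qV_low qV_high, (rule node_inner_cheb_binom_disjoint; arith)+)
  with False show ?thesis by simp
qed

lemma node_inner_qW_off_diagonal:
  assumes "0 < m" "m < n" "3 * n + m \<le> K" "n \<le> r" "r < 3 * n" "n \<le> r'" "r' < 3 * n" "r \<noteq> r'"
  shows "node_inner K (qW n m r) (qW n m r') = 0"
  using assms
  by (cases r n m rule: wavelet_index_cases; cases r' n m rule: wavelet_index_cases)
    (simp_all only: qW_low qW_middle qW_high, (rule node_inner_cheb_binom_disjoint; arith)+)

lemma node_inner_qW_qV:
  assumes "0 < m" "m < n" "3 * n + m \<le> K" "n \<le> r" "r < 3 * n" "s < n"
  shows "node_inner K (qW n m r) (qV n m s) = 0"
proof (cases "r = 2 * n - s \<and> n - m < s")
  case True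
  then have "2 * n - r = s" "2 * n - s = r" "2 * n - r \<noteq> r" "r < n + m"
    using assms by auto
  with True assms show ?thesis
    by (simp add: qW_low qV_high node_inner_cheb_binom_same)
next
  case False
  with assms show ?thesis
    by (cases r n m rule: wavelet_index_cases; cases s n m rule: scaling_index_cases)
      (simp_all only: qW_low qW_middle qW_high qV_low qV_high,
        (rule node_inner_cheb_binom_disjoint; arith)+)
qed

lemma node_inner_qW_diagonal:
  assumes "0 < m" "m < n" "3 * n + m \<le> K" "n \<le> r" "r < 3 * n"
  shows "node_inner K (qW n m r) (qW n m r) = vW n m r"
proof (cases r n m rule: wavelet_index_cases)
  case low
  show ?thesis
  proof (cases "r = n")
    case True
    with assms show ?thesis
      by (simp add: qW_low node_inner_cheb_binom mu_def vW_def)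
  next
    case False
    then have "mu n m (2 * n - r) ^ 2 + mu n m (2 * n - (2 * n - r)) ^ 2 = nu n m (2 * n - r)"
      using assms low by (intro mu_sq_add_mu_reflect_sq) auto
    moreover have "2 * n - (2 * n - r) = r" "2 * n - r \<noteq> r" "nu n m (2 * n - r) = vW n m r"
      using assms low False by (auto simp: nu_def vW_def of_nat_diff power2_commute)
    ultimately show ?thesis
      using assms low False by (simp add: qW_low node_inner_cheb_binom power2_eq_square)
  qed
next
  case middle
  with assms show ?thesis
    by (simp add: qW_middle node_inner_cheb_binom vW_def)
next
  case high
  with assms show ?thesis
    by (simp add: qW_high_eq_qV vW_high_eq_nu node_inner_qV)
qed

lemma node_inner_qW:
  assumes "0 < m" "m < n" "3 * n + m \<le> K" "n \<le> r" "r < 3 * n" "n \<le> r'" "r' < 3 * n"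
  shows "node_inner K (qW n m r) (qW n m r') = (if r = r' then vW n m r else 0)"
  using assms node_inner_qW_diagonal node_inner_qW_off_diagonal by simp

lemma phiV_eq_sum: "phiV N m k = (\<lambda>x. \<Sum>r\<in>{..<N}. tau N m r k * qV N m r x)"
  by (simp add: fun_eq_iff phiV_def)

lemma psiW_eq_sum: "psiW n m h = (\<lambda>x. \<Sum>r\<in>{n..<3 * n}. sigma n r h / sqrt (vW n m r) * qW n m r x)"
  by (simp add: fun_eq_iff psiW_def)

lemma cheb_p_products_at_nodes:
  assumes "k \<in> {1..N}" "l \<in> {1..N}"
  shows "(\<Sum>r<N. cheb_p r (cheb_node N k) * cheb_p r (cheb_node N l))
    = 2 / pi * (1 / 2 + (\<Sum>s\<in>{1..<N}. cos (real s * cheb_angle N k) * cos (real s * cheb_angle N l)))"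
proof -
  have "{..<N} = insert 0 {1..<N}" using assms by auto
  moreover have "cheb_p r (cheb_node N k) * cheb_p r (cheb_node N l)
      = cheb_scale r * cheb_scale r * (cos (real r * cheb_angle N k) * cos (real r * cheb_angle N l))" for r
    using assms by (simp add: cheb_p_cheb_node ac_simps)
  ultimately show ?thesis
    by (simp add: cheb_scale_mult_self sum_distrib_left algebra_simps)
qed

lemma nu_pos: "0 < m \<Longrightarrow> 0 < nu N m r"
  by (auto simp: nu_def intro!: divide_pos_pos add_pos_nonneg)

lemma tau_mult_tau_mult_nu:
  assumes "0 < m"
  shows "tau N m r k * tau N m r l * nu N m r
    = pi / real N * (cheb_p r (cheb_node N k) * cheb_p r (cheb_node N l))"
proof -
  have nu: "0 < nu N m r" using nu_pos[OF assms] .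
  have "tau N m r k * tau N m r l * nu N m r
      = sqrt (pi / (real N * nu N m r)) * sqrt (pi / (real N * nu N m r)) * nu N m r
        * (cheb_p r (cheb_node N k) * cheb_p r (cheb_node N l))"
    by (simp add: tau_def ac_simps)
  also have "\<dots> = pi / real N * (cheb_p r (cheb_node N k) * cheb_p r (cheb_node N l))"
    using nu by simp
  finally show ?thesis .
qed

lemma node_inner_phiV:
  assumes "0 < m" "N + m \<le> K" "k \<in> {1..N}" "l \<in> {1..N}"
  shows "node_inner K (phiV N m k) (phiV N m l) = (if k = l then 1 else 0)"
proof -
  have "node_inner K (phiV N m k) (phiV N m l)
      = (\<Sum>r<N. tau N m r k * (\<Sum>r'<N. tau N m r' l * node_inner K (qV N m r) (qV N m r')))"
    unfolding phiV_eq_sum node_inner_sum_left node_inner_sum_right ..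
  also have "\<dots> = (\<Sum>r<N. tau N m r k * tau N m r l * nu N m r)"
    using assms by (simp add: node_inner_qV if_distrib[of "(*) _"] ac_simps cong: if_cong)
  also have "\<dots> = pi / real N * (\<Sum>r<N. cheb_p r (cheb_node N k) * cheb_p r (cheb_node N l))"
    using assms by (simp add: tau_mult_tau_mult_nu sum_distrib_left)
  also have "\<dots> = (if k = l then 1 else 0)"
    unfolding cheb_p_products_at_nodes[OF assms(3,4)] cheb_angles_dual_orthogonal[OF assms(3,4)]
    using assms by auto
  finally show ?thesis .
qed

lemma vW_pos: "0 < m \<Longrightarrow> 0 < vW n m r"
  by (auto simp: vW_def intro!: divide_pos_pos add_pos_nonneg)

lemma node_inner_psiW_phiV:
  assumes "0 < m" "m < n" "3 * n + m \<le> K" "k \<in> {1..n}"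
  shows "node_inner K (psiW n m h) (phiV n m k) = 0"
  unfolding psiW_eq_sum phiV_eq_sum node_inner_sum_left node_inner_sum_right
  using assms by (simp add: node_inner_qW_qV)

lemma node_inner_psiW:
  assumes "0 < m" "m < n" "3 * n + m \<le> K"
  shows "node_inner K (psiW n m h) (psiW n m h') = (\<Sum>r\<in>{n..<3 * n}. sigma n r h * sigma n r h')"
proof -
  have "node_inner K (psiW n m h) (psiW n m h')
      = (\<Sum>r\<in>{n..<3 * n}.
          sigma n r h / sqrt (vW n m r) * (sigma n r h' / sqrt (vW n m r) * vW n m r))"
    unfolding psiW_eq_sum node_inner_sum_left node_inner_sum_right
    using assms by (simp add: node_inner_qW if_distrib[of "(*) _"] cong: if_cong)
  also have "\<dots> = (\<Sum>r\<in>{n..<3 * n}. sigma n r h * sigma n r h')"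
  proof (intro sum.cong refl)
    fix r
    have "0 < vW n m r" using vW_pos[OF assms(1)] .
    then show "sigma n r h / sqrt (vW n m r) * (sigma n r h' / sqrt (vW n m r) * vW n m r)
        = sigma n r h * sigma n r h'"
      by (simp add: field_simps)
  qed
  finally show ?thesis .
qed

lemma node_inner_psiW_orthonormal:
  assumes "0 < m" "m < n" "3 * n + m \<le> K" "h \<in> {1..2 * n}" "h' \<in> {1..2 * n}"
  shows "node_inner K (psiW n m h) (psiW n m h') = (if h = h' then 1 else 0)"
  using assms by (simp add: node_inner_psiW sigma_orthonormal)

lemma node_inner_cheb_p_qV:
  assumes "0 < m" "N + m \<le> K" "i \<le> N - m" "r < N"
  shows "node_inner K (cheb_p i) (qV N m r) = (if i = r then 1 else 0)"
  using assms
  by (cases r N m rule: scaling_index_cases)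
    (auto simp: qV_low qV_high node_inner_commute[of K "cheb_p i"] node_inner_cheb_binom_left
      node_inner_cheb_p)

lemma node_inner_cheb_p_phiV:
  assumes "0 < m" "m < N" "N + m \<le> K" "i \<le> N - m"
  shows "node_inner K (cheb_p i) (phiV N m j) = tau N m i j"
proof -
  have "i < N" using assms by linarith
  with assms show ?thesis
    unfolding phiV_eq_sum node_inner_sum_right
    by (simp add: node_inner_cheb_p_qV if_distrib[of "(*) _"] cong: if_cong)
qed

lemma node_inner_qV_phiV:
  assumes "0 < m" "N + m \<le> K" "r < N"
  shows "node_inner K (qV N m r) (phiV N m j) = nu N m r * tau N m r j"
  unfolding phiV_eq_sum node_inner_sum_right
  using assms by (simp add: node_inner_qV if_distrib[of "(*) _"] cong: if_cong)

lemma node_inner_qV_phiV3: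
  assumes "0 < m" "m < n" "3 * n + m \<le> K" "s < n"
  shows "node_inner K (qV n m s) (phiV (3 * n) m j)
    = (if s \<le> n - m then tau (3 * n) m s j
       else mu n m s * tau (3 * n) m s j - mu n m (2 * n - s) * tau (3 * n) m (2 * n - s) j)"
  using assms
  by (cases s n m rule: scaling_index_cases)
    (simp_all add: qV_low qV_high node_inner_cheb_binom_left node_inner_cheb_p_phiV)

lemma node_inner_qW_phiV3:
  assumes "0 < m" "m < n" "3 * n + m \<le> K" "n \<le> r" "r < 3 * n"
  shows "node_inner K (qW n m r) (phiV (3 * n) m j)
    = (if r < n + m then mu n m r * tau (3 * n) m (2 * n - r) j + mu n m (2 * n - r) * tau (3 * n) m r j
       else if r \<le> 3 * n - m then tau (3 * n) m r j
       else vW n m r * tau (3 * n) m r j)"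
proof (cases r n m rule: wavelet_index_cases)
  case high
  then have "\<not> r < n + m" using assms by linarith
  with high assms show ?thesis
    by (simp add: qW_high_eq_qV vW_high_eq_nu node_inner_qV_phiV)
qed (use assms in \<open>simp_all add: qW_low qW_middle node_inner_cheb_binom_left node_inner_cheb_p_phiV\<close>)

lemma node_inner_phiV_phiV3_eq_matA:
  assumes "0 < m" "m < n" "3 * n + m \<le> K"
  shows "node_inner K (phiV n m k) (phiV (3 * n) m j) = matA n m k j"
proof -
  define E where "E s = tau n m s k * node_inner K (qV n m s) (phiV (3 * n) m j)" for s
  have "node_inner K (phiV n m k) (phiV (3 * n) m j) = (\<Sum>s<n. E s)"
    unfolding phiV_eq_sum[of n m k] node_inner_sum_left E_def ..
  also have "\<dots> = (\<Sum>s\<in>{0..<n - m + 1}. E s) + (\<Sum>s\<in>{n - m + 1..<n}. E s)"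
    unfolding lessThan_atLeast0 by (rule sum.atLeastLessThan_concat[symmetric]) (use assms in auto)
  also have "(\<Sum>s\<in>{0..<n - m + 1}. E s) = (\<Sum>s = 0..n - m. tau n m s k * tau (3 * n) m s j)"
    using assms by (simp add: E_def node_inner_qV_phiV3 atLeastLessThanSuc_atLeastAtMost)
  also have "(\<Sum>s\<in>{n - m + 1..<n}. E s) = (\<Sum>s = n - m + 1..n - 1. tau n m s k *
        (mu n m s * tau (3 * n) m s j - mu n m (2 * n - s) * tau (3 * n) m (2 * n - s) j))"
  proof -
    have "{n - m + 1..<n} = {n - m + 1..n - 1}" using assms by auto
    then show ?thesis
      using assms by (intro sum.cong) (auto simp: E_def node_inner_qV_phiV3)
  qed
  finally show ?thesis unfolding matA_def .
qed

lemma node_inner_psiW_phiV3_eq_matB: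
  assumes "0 < m" "m < n" "3 * n + m \<le> K"
  shows "node_inner K (psiW n m h) (phiV (3 * n) m j) = matB n m h j"
proof -
  define E where "E r = sigma n r h / sqrt (vW n m r) * node_inner K (qW n m r) (phiV (3 * n) m j)" for r
  have "node_inner K (psiW n m h) (phiV (3 * n) m j) = (\<Sum>r\<in>{n..<3 * n}. E r)"
    unfolding psiW_eq_sum node_inner_sum_left E_def ..
  also have "\<dots> = (\<Sum>r\<in>{n..<n + m}. E r) + (\<Sum>r\<in>{n + m..<3 * n - m + 1}. E r)
      + (\<Sum>r\<in>{3 * n - m + 1..<3 * n}. E r)"
  proof -
    have "sum E {n..<n + m} + sum E {n + m..<3 * n - m + 1} = sum E {n..<3 * n - m + 1}"
      and "sum E {n..<3 * n - m + 1} + sum E {3 * n - m + 1..<3 * n} = sum E {n..<3 * n}"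
      using assms by (intro sum.atLeastLessThan_concat; simp)+
    then show ?thesis by simp
  qed
  also have "(\<Sum>r\<in>{n..<n + m}. E r) = (\<Sum>r = n..n + m - 1. sigma n r h / sqrt (vW n m r) *
        (mu n m r * tau (3 * n) m (2 * n - r) j + mu n m (2 * n - r) * tau (3 * n) m r j))"
  proof -
    have "{n..<n + m} = {n..n + m - 1}" using assms by auto
    then show ?thesis
      using assms by (intro sum.cong) (auto simp: E_def node_inner_qW_phiV3)
  qed
  also have "(\<Sum>r\<in>{n + m..<3 * n - m + 1}. E r)
      = (\<Sum>r = n + m..3 * n - m. sigma n r h / sqrt (vW n m r) * tau (3 * n) m r j)"
    using assms by (intro sum.cong) (auto simp: E_def node_inner_qW_phiV3)
  also have "(\<Sum>r\<in>{3 * n - m + 1..<3 * n}. E r)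
      = (\<Sum>r = 3 * n - m + 1..3 * n - 1. sigma n r h * sqrt (vW n m r) * tau (3 * n) m r j)"
  proof -
    have "{3 * n - m + 1..<3 * n} = {3 * n - m + 1..3 * n - 1}" using assms by auto
    moreover have "sigma n r h / sqrt (vW n m r) * (vW n m r * t) = sigma n r h * sqrt (vW n m r) * t"
      for r t
    proof -
      have "0 < vW n m r" using vW_pos[OF assms(1)] .
      then have "vW n m r / sqrt (vW n m r) = sqrt (vW n m r)" by (simp add: real_div_sqrt)
      then show ?thesis by (metis mult.assoc mult.commute times_divide_eq_left times_divide_eq_right)
    qed
    ultimately show ?thesis
      using assms by (intro sum.cong) (auto simp: E_def node_inner_qW_phiV3)
  qed
  finally show ?thesis unfolding matB_def .
qed

theorem theorem4:
  fixes n m :: nat and an bn a3n :: "nat \<Rightarrow> real"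
    and fn gn f3n :: "real \<Rightarrow> real"
  assumes "0 < m" and "m < n"
    and fn_def: "\<And>x. fn x = (\<Sum>k = 1..n. an k * phiV n m k x)"
    and gn_def: "\<And>x. gn x = (\<Sum>h = 1..2 * n. bn h * psiW n m h x)"
    and f3n_def: "\<And>x. f3n x = (\<Sum>j = 1..3 * n. a3n j * phiV (3 * n) m j x)"
    and sum_eq: "\<And>x. x \<in> {-1..1} \<Longrightarrow> f3n x = fn x + gn x"
  shows "(\<forall>k \<in> {1..n}. an k = (\<Sum>j = 1..3 * n. matA n m k j * a3n j))
       \<and> (\<forall>h \<in> {1..2 * n}. bn h = (\<Sum>j = 1..3 * n. matB n m h j * a3n j))
       \<and> (\<forall>j \<in> {1..3 * n}. a3n j = (\<Sum>k = 1..n. matA n m k j * an k)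
                                   + (\<Sum>h = 1..2 * n. matB n m h j * bn h))"
proof -
  define K where "K = 4 * n"
  have K: "3 * n + m \<le> K" "n + m \<le> K" using assms(1,2) by (auto simp: K_def)
  have fn: "fn = (\<lambda>x. \<Sum>k\<in>{1..n}. an k * phiV n m k x)"
    and gn: "gn = (\<lambda>x. \<Sum>h\<in>{1..2 * n}. bn h * psiW n m h x)"
    and f3n: "f3n = (\<lambda>x. \<Sum>j\<in>{1..3 * n}. a3n j * phiV (3 * n) m j x)"
    using fn_def gn_def f3n_def by auto
  have split: "node_inner K f3n G = node_inner K fn G + node_inner K gn G" for G
    using node_inner_cong_left[of f3n "\<lambda>x. fn x + gn x"] sum_eq by (simp add: node_inner_add_left)
  have A: "node_inner K (phiV (3 * n) m j) (phiV n m k) = matA n m k j" for k j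
    using node_inner_phiV_phiV3_eq_matA[OF assms(1,2) K(1)] node_inner_commute by metis
  have B: "node_inner K (phiV (3 * n) m j) (psiW n m h) = matB n m h j" for h j
    using node_inner_psiW_phiV3_eq_matB[OF assms(1,2) K(1)] node_inner_commute by metis
  have "an k = (\<Sum>j = 1..3 * n. matA n m k j * a3n j)" if "k \<in> {1..n}" for k
    using split[of "phiV n m k"] that assms(1,2) K unfolding fn gn f3n node_inner_sum_left
    by (simp add: node_inner_phiV node_inner_psiW_phiV A if_distrib[of "(*) _"] mult.commute[of "a3n _"]
        cong: if_cong)
  moreover have "bn h = (\<Sum>j = 1..3 * n. matB n m h j * a3n j)" if "h \<in> {1..2 * n}" for h
    using split[of "psiW n m h"] that assms(1,2) K unfolding fn gn f3n node_inner_sum_left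
    by (simp add: node_inner_psiW_orthonormal node_inner_commute[of K "phiV n m _" "psiW n m h"]
        node_inner_psiW_phiV B if_distrib[of "(*) _"] mult.commute[of "a3n _"] cong: if_cong)
  moreover have "a3n j = (\<Sum>k = 1..n. matA n m k j * an k) + (\<Sum>h = 1..2 * n. matB n m h j * bn h)"
    if "j \<in> {1..3 * n}" for j
    using split[of "phiV (3 * n) m j"] that assms(1,2) K unfolding fn gn f3n node_inner_sum_left
    by (simp add: node_inner_phiV node_inner_phiV_phiV3_eq_matA node_inner_psiW_phiV3_eq_matB
        if_distrib[of "(*) _"] mult.commute[of "an _"] mult.commute[of "bn _"] cong: if_cong)
  ultimately show ?thesis by blast
qed

end
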